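(* Let $J\in\mathcal{D}(X)$ and, for each $x\in X$, let $\bar U(x)\subset U(x)$ be such that $(\bar TJ)(x)\le J(x)$ for all $x\in X$, where $(\bar TJ')(x)=\inf_{u\in\bar U(x)}\{g(x,u)+J'(f(x,u))\}$ for $J'\in\mathcal{E}^+(X)$. Then $\bar TJ\in\mathcal{D}(X)$.
   Context: Setting: $X$ (state space) and $U$ (control space) are sets; for each $x\in X$, $U(x)\subset U$ is nonempty; $f:X\times U\to X$; the stage cost $g$ satisfies $0\le g(x,u)\le\infty$ for all $x\in X$, $u\in U(x)$. $\mathcal{E}^+(X)$ denotes the set of all functions $J:X\to[0,\infty]$. The Bellman operator is $(TJ)(x)=\inf_{u\in U(x)}\{g(x,u)+J(f(x,u))\}$. The region of decreasing is $\mathcal{D}(X)=\{J\in\mathcal{E}^+(X): (TJ)(x)\le J(x)\ \forall x\in X\}$. Standing assumption: for every $J\in\mathcal{E}^+(X)$ and every $x\in X$, the infimum defining $(TJ)(x)$ is attained. *)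

theory Defs
  imports "HOL-Library.Extended_Nonnegative_Real"
begin

definition bellman :: "('x \<Rightarrow> 'u set) \<Rightarrow> ('x \<Rightarrow> 'u \<Rightarrow> ennreal) \<Rightarrow> ('x \<Rightarrow> 'u \<Rightarrow> 'x)
    \<Rightarrow> ('x \<Rightarrow> ennreal) \<Rightarrow> 'x \<Rightarrow> ennreal" where
  "bellman Uc g f J x = (INF u\<in>Uc x. g x u + J (f x u))"

definition region_dec :: "('x \<Rightarrow> 'u set) \<Rightarrow> ('x \<Rightarrow> 'u \<Rightarrow> ennreal) \<Rightarrow> ('x \<Rightarrow> 'u \<Rightarrow> 'x)
    \<Rightarrow> ('x \<Rightarrow> ennreal) set" where
  "region_dec Uc g f = {J. \<forall>x. bellman Uc g f J x \<le> J x}"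

end

theory Submission
  imports Defs
begin

text \<open>Write \<open>T\<close> and \<open>T'\<close> for the Bellman operators with constraint sets \<open>U\<close> and
  \<open>Ubar \<subseteq> U\<close>. Since \<open>T\<close> is monotone in the cost-to-go and antitone in the constraint set,
  \<open>T' J \<le> J\<close> gives \<open>T (T' J) \<le> T J \<le> T' J\<close>.\<close>

lemma bellman_mono:
  assumes "\<And>y. J y \<le> J' y"
  shows "bellman Uc g f J x \<le> bellman Uc g f J' x"
  unfolding bellman_def by (rule INF_mono') (intro add_left_mono assms)

lemma bellman_antimono_controls:
  assumes "Ubar x \<subseteq> U x"
  shows "bellman U g f J x \<le> bellman Ubar g f J x"
  unfolding bellman_def by (rule INF_superset_mono[OF assms]) simp

theorem proposition7:
  fixes U :: "'x \<Rightarrow> 'u set" and Ubar :: "'x \<Rightarrow> 'u set"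
    and g :: "'x \<Rightarrow> 'u \<Rightarrow> ennreal" and f :: "'x \<Rightarrow> 'u \<Rightarrow> 'x"
    and J :: "'x \<Rightarrow> ennreal"
  assumes U_ne: "\<And>x. U x \<noteq> {}"
    and attained: "\<And>J' x. \<exists>u\<in>U x. bellman U g f J' x = g x u + J' (f x u)"
    and J_dec: "J \<in> region_dec U g f"
    and Ubar_sub: "\<And>x. Ubar x \<subseteq> U x"
    and Ubar_dec: "\<And>x. bellman Ubar g f J x \<le> J x"
  shows "bellman Ubar g f J \<in> region_dec U g f"
  unfolding region_dec_def
proof (intro CollectI allI)
  fix x
  have "bellman U g f (bellman Ubar g f J) x \<le> bellman U g f J x"
    using Ubar_dec by (rule bellman_mono)
  also have "\<dots> \<le> bellman Ubar g f J x"
    using Ubar_sub by (rule bellman_antimono_controls)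
  finally show "bellman U g f (bellman Ubar g f J) x \<le> bellman Ubar g f J x" .
qed

end
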